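(* Let $X$ be a locally convex topological space, and let $C_0(X)$ be the Banach space (with norm $\|f\|_{C_0(X)}=\max_{x\in X}|f(x)|$) of continuous $f:X\to\mathbb{R}$ such that $\{x\in X:|f(x)|>\varepsilon\}$ is compact for every $\varepsilon>0$. Let $\mathcal{M}(X)$ be the space of signed Borel measures on $X$ of bounded total variation, with total variation norm $\|\mu\|$. Let $K:X\times X\to\mathbb{R}$ satisfy $K(\cdot,x)\in C_0(X)$ for all $x\in X$ and $$\overline{\mathrm{span}}\{K(\cdot,x):x\in X\}=C_0(X)$$ (closure in $C_0(X)$). Define $$\mathcal{B}:=\Big\{f_\mu:=\int_X K(t,\cdot)\,d\mu(t):\ \mu\in\mathcal{M}(X)\Big\},\qquad \|f_\mu\|_{\mathcal{B}}:=\|\mu\|.$$ Then $\mathcal{B}$ is a pre-RKBS on $X$; that is, $\|\cdot\|_{\mathcal B}$ is well defined and $\mathcal{B}$ is a Banach space of functions on $X$ on which all point evaluation functionals are continuous, and for $f\in\mathcal{B}$, $\|f\|_{\mathcal B}=0$ if and only if $f$ vanishes everywhere on $X$.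
   Context: Standing assumptions of the paper for this setting: the dual of $C_0(X)$ is identified isometrically with $\mathcal{M}(X)$ via $T(f)=\int_X f\,d\mu$ with operator norm equal to $\|\mu\|$; and for all pairwise distinct $x_1,\dots,x_m\in X$ the matrix $K[{\bf x}]$ with entries $(K[{\bf x}])_{j,k}=K(x_k,x_j)$ is nonsingular. *)

theory Defs
  imports "HOL-Analysis.Analysis"
begin

definition C0 :: "('a::topological_space \<Rightarrow> real) set" where
  "C0 = {f. continuous_on UNIV f \<and> (\<forall>\<epsilon>>0. compact {x. \<bar>f x\<bar> > \<epsilon>})}"

definition C0_norm :: "('a::topological_space \<Rightarrow> real) \<Rightarrow> real" where
  "C0_norm f = (SUP x. \<bar>f x\<bar>)"

text \<open>A (finite, real-valued) signed Borel measure is a countably additive set function on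
  the Borel sets. Only its values on Borel sets matter.\<close>

definition signed_borel_measure :: "('a::topological_space set \<Rightarrow> real) \<Rightarrow> bool" where
  "signed_borel_measure \<nu> \<longleftrightarrow> \<nu> {} = 0 \<and>
     (\<forall>A::nat \<Rightarrow> 'a set. range A \<subseteq> sets borel \<and> disjoint_family A \<longrightarrow>
        (\<lambda>n. \<nu> (A n)) sums \<nu> (\<Union>n. A n))"

definition partition_sums :: "('a::topological_space set \<Rightarrow> real) \<Rightarrow> real set" where
  "partition_sums \<nu> = {(\<Sum>A\<in>P. \<bar>\<nu> A\<bar>) | P. finite P \<and> P \<subseteq> sets borel \<and> disjoint P \<and> \<Union>P = UNIV}"

definition tv_norm :: "('a::topological_space set \<Rightarrow> real) \<Rightarrow> real" where
  "tv_norm \<nu> = Sup (partition_sums \<nu>)"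

definition bounded_variation :: "('a::topological_space set \<Rightarrow> real) \<Rightarrow> bool" where
  "bounded_variation \<nu> \<longleftrightarrow> bdd_above (partition_sums \<nu>)"

definition Meas :: "('a::topological_space set \<Rightarrow> real) set" where
  "Meas = {\<nu>. signed_borel_measure \<nu> \<and> bounded_variation \<nu>}"

definition pos_var :: "('a::topological_space set \<Rightarrow> real) \<Rightarrow> 'a set \<Rightarrow> real" where
  "pos_var \<nu> A = Sup {\<nu> B | B. B \<in> sets borel \<and> B \<subseteq> A}"

definition neg_var :: "('a::topological_space set \<Rightarrow> real) \<Rightarrow> 'a set \<Rightarrow> real" where
  "neg_var \<nu> A = Sup {- \<nu> B | B. B \<in> sets borel \<and> B \<subseteq> A}"

definition jordan_pos :: "('a::topological_space set \<Rightarrow> real) \<Rightarrow> 'a measure" where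
  "jordan_pos \<nu> = measure_of UNIV (sets borel) (\<lambda>A. ennreal (pos_var \<nu> A))"

definition jordan_neg :: "('a::topological_space set \<Rightarrow> real) \<Rightarrow> 'a measure" where
  "jordan_neg \<nu> = measure_of UNIV (sets borel) (\<lambda>A. ennreal (neg_var \<nu> A))"

definition sintegral :: "('a::topological_space set \<Rightarrow> real) \<Rightarrow> ('a \<Rightarrow> real) \<Rightarrow> real" where
  "sintegral \<nu> f = integral\<^sup>L (jordan_pos \<nu>) f - integral\<^sup>L (jordan_neg \<nu>) f"

definition fmu :: "('a::topological_space \<Rightarrow> 'a \<Rightarrow> real) \<Rightarrow> ('a set \<Rightarrow> real) \<Rightarrow> 'a \<Rightarrow> real" where
  "fmu K \<mu> = (\<lambda>x. sintegral \<mu> (\<lambda>t. K t x))"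

definition Bspace :: "('a::topological_space \<Rightarrow> 'a \<Rightarrow> real) \<Rightarrow> ('a \<Rightarrow> real) set" where
  "Bspace K = {fmu K \<mu> | \<mu>. \<mu> \<in> Meas}"

text \<open>$\|f_\mu\|_B := \|\mu\|$ (meaningful once well-definedness is established).\<close>
definition normB :: "('a::topological_space \<Rightarrow> 'a \<Rightarrow> real) \<Rightarrow> ('a \<Rightarrow> real) \<Rightarrow> real" where
  "normB K f = tv_norm (SOME \<mu>. \<mu> \<in> Meas \<and> f = fmu K \<mu>)"

end

theory Submission
  imports Defs
begin

text \<open>
  By the two duality hypotheses, \<mu> \<mapsto> (f \<mapsto> \<integral>f d\<mu>) identifies M(X) isometrically with the
  dual of C0(X). Since f\<mu>(x) is this functional evaluated at the kernel section K(\<cdot>, x), and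
  the kernel sections span a dense subspace, f\<mu> determines the functional and hence the norm
  of \<mu>. So B is a linear isometric copy of the dual of C0(X); it is complete because a dual
  space is, and |f\<mu>(x)| \<le> \<parallel>\<mu>\<parallel> \<parallel>K(\<cdot>, x)\<parallel> makes point evaluations continuous.
\<close>

section \<open>Integration of bounded continuous functions against a signed measure\<close>

lemma sets_jordan [simp]:
  "sets (jordan_pos \<mu>) = sets borel" "space (jordan_pos \<mu>) = UNIV"
  "sets (jordan_neg \<mu>) = sets borel" "space (jordan_neg \<mu>) = UNIV"
  unfolding jordan_pos_def jordan_neg_def
  by (simp_all add: sets_measure_of_conv space_measure_of_conv
      sets.sigma_sets_eq[of borel, simplified])

lemma finite_measure_jordan:
  "finite_measure (jordan_pos \<mu>)" "finite_measure (jordan_neg \<mu>)"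
  by (rule finite_measureI,
      simp add: jordan_pos_def jordan_neg_def emeasure_measure_of_conv space_measure_of_conv)+

lemma bcontfun_cmult: "f \<in> bcontfun \<Longrightarrow> (\<lambda>x. c * f x :: real) \<in> bcontfun"
  using scaleR_cont[of f c] by simp

lemma bcontfun_sum:
  "(\<And>i. i \<in> I \<Longrightarrow> f i \<in> bcontfun) \<Longrightarrow> (\<lambda>x. \<Sum>i\<in>I. f i x :: real) \<in> bcontfun"
  by (induction I rule: infinite_finite_induct) (auto intro: plus_cont const_bcontfun)

lemma bcontfun_abs_bound:
  fixes f :: "'a::topological_space \<Rightarrow> real"
  assumes "f \<in> bcontfun"
  obtains B where "\<And>x. \<bar>f x\<bar> \<le> B"
  using assms by (force simp: bcontfun_def bounded_iff)

lemma integrable_bcontfun: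
  fixes f :: "'a::topological_space \<Rightarrow> real"
  assumes M: "finite_measure M" "sets M = sets borel" and f: "f \<in> bcontfun"
  shows "integrable M f"
proof -
  obtain B where "\<And>x. \<bar>f x\<bar> \<le> B" using bcontfun_abs_bound[OF f] by blast
  moreover have "f \<in> borel_measurable M"
    using f by (simp add: measurable_cong_sets[OF M(2) refl] bcontfun_def
        borel_measurable_continuous_onI)
  ultimately show ?thesis
    by (intro finite_measure.integrable_const_bound[OF M(1), where B = B]) auto
qed

lemma abs_integral_le_measure_mult:
  fixes f :: "'a \<Rightarrow> real"
  assumes "finite_measure M" "integrable M f" "\<And>x. \<bar>f x\<bar> \<le> B"
  shows "\<bar>integral\<^sup>L M f\<bar> \<le> measure M (space M) * B"
proof -
  have "\<bar>integral\<^sup>L M f\<bar> \<le> integral\<^sup>L M (\<lambda>x. \<bar>f x\<bar>)" by (rule integral_abs_bound)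
  also have "\<dots> \<le> integral\<^sup>L M (\<lambda>x. B)"
    using assms finite_measure.integrable_const[OF assms(1)] by (intro integral_mono) auto
  also have "\<dots> = measure M (space M) * B" by simp
  finally show ?thesis .
qed

lemma integrable_jordan:
  fixes f :: "'a::topological_space \<Rightarrow> real"
  assumes "f \<in> bcontfun"
  shows "integrable (jordan_pos \<mu>) f" "integrable (jordan_neg \<mu>) f"
  using assms by (auto intro: integrable_bcontfun finite_measure_jordan)

lemma sintegral_add:
  "f \<in> bcontfun \<Longrightarrow> g \<in> bcontfun \<Longrightarrow>
    sintegral \<mu> (\<lambda>x. f x + g x) = sintegral \<mu> f + sintegral \<mu> g"
  unfolding sintegral_def by (simp add: integrable_jordan)

lemma sintegral_cmult: "sintegral \<mu> (\<lambda>x. c * f x) = c * sintegral \<mu> f"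
  unfolding sintegral_def by (simp add: algebra_simps)

lemma sintegral_diff:
  "f \<in> bcontfun \<Longrightarrow> g \<in> bcontfun \<Longrightarrow>
    sintegral \<mu> (\<lambda>x. f x - g x) = sintegral \<mu> f - sintegral \<mu> g"
  unfolding sintegral_def by (simp add: integrable_jordan)

lemma sintegral_sum:
  "(\<And>i. i \<in> I \<Longrightarrow> f i \<in> bcontfun) \<Longrightarrow>
    sintegral \<mu> (\<lambda>x. \<Sum>i\<in>I. f i x) = (\<Sum>i\<in>I. sintegral \<mu> (f i))"
proof (induction I rule: infinite_finite_induct)
  case (insert i I)
  then show ?case by (simp add: sintegral_add bcontfun_sum)
qed (simp_all add: sintegral_def)

definition jordan_mass :: "('a::topological_space set \<Rightarrow> real) \<Rightarrow> real" where
  "jordan_mass \<mu> = measure (jordan_pos \<mu>) UNIV + measure (jordan_neg \<mu>) UNIV"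

lemma jordan_mass_nonneg: "0 \<le> jordan_mass \<mu>"
  by (simp add: jordan_mass_def)

lemma abs_sintegral_le:
  assumes "f \<in> bcontfun" "\<And>x. \<bar>f x\<bar> \<le> B"
  shows "\<bar>sintegral \<mu> f\<bar> \<le> jordan_mass \<mu> * B"
proof -
  have "\<bar>integral\<^sup>L (jordan_pos \<mu>) f\<bar> \<le> measure (jordan_pos \<mu>) UNIV * B"
    using abs_integral_le_measure_mult[OF finite_measure_jordan(1)
        integrable_jordan(1)[OF assms(1)] assms(2)] by simp
  moreover have "\<bar>integral\<^sup>L (jordan_neg \<mu>) f\<bar> \<le> measure (jordan_neg \<mu>) UNIV * B"
    using abs_integral_le_measure_mult[OF finite_measure_jordan(2)
        integrable_jordan(2)[OF assms(1)] assms(2)] by simp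
  ultimately show ?thesis
    unfolding sintegral_def jordan_mass_def
    by (simp add: algebra_simps abs_triangle_ineq4 add_mono order_trans)
qed

section \<open>Bounded linear functionals on C0(X)\<close>

lemma cSUP_cmult_nonneg:
  fixes g :: "'b \<Rightarrow> real"
  assumes "A \<noteq> {}" "bdd_above (g ` A)" "0 \<le> c"
  shows "(SUP x\<in>A. c * g x) = c * (SUP x\<in>A. g x)"
  using continuous_at_Sup_mono[of "\<lambda>y. c * y" "g ` A"] assms
  by (simp add: mono_def mult_left_mono image_image continuous_intros)

lemma C0_imp_bcontfun:
  assumes "f \<in> C0"
  shows "f \<in> bcontfun"
proof -
  have cont: "continuous_on UNIV f" and "compact {x. \<bar>f x\<bar> > 1}"
    using assms by (auto simp: C0_def)
  then have "compact (f ` {x. \<bar>f x\<bar> > 1})"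
    by (intro compact_continuous_image continuous_on_subset[OF cont]) auto
  then obtain B where B: "\<forall>y\<in>f ` {x. \<bar>f x\<bar> > 1}. norm y \<le> B"
    using compact_imp_bounded bounded_iff by metis
  have "norm (f x) \<le> max B 1" for x
    using B by (cases "\<bar>f x\<bar> > 1") auto
  with cont show ?thesis by (rule bcontfun_normI)
qed

lemma bdd_above_abs_bcontfun:
  fixes f :: "'a::topological_space \<Rightarrow> real"
  assumes "f \<in> bcontfun"
  shows "bdd_above (range (\<lambda>x. \<bar>f x\<bar>))"
proof -
  obtain B where "\<And>x. \<bar>f x\<bar> \<le> B" using bcontfun_abs_bound[OF assms] by blast
  then show ?thesis by (intro bdd_aboveI2)
qed

lemma abs_le_C0_norm: "f \<in> bcontfun \<Longrightarrow> \<bar>f x\<bar> \<le> C0_norm f"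
  unfolding C0_norm_def by (rule cSUP_upper[OF _ bdd_above_abs_bcontfun]) auto

lemma C0_norm_nonneg: "f \<in> bcontfun \<Longrightarrow> 0 \<le> C0_norm f"
  using abs_le_C0_norm[of f undefined] by linarith

lemma C0_norm_cmult: "f \<in> bcontfun \<Longrightarrow> C0_norm (\<lambda>x. c * f x) = \<bar>c\<bar> * C0_norm f"
  unfolding C0_norm_def abs_mult by (simp add: cSUP_cmult_nonneg bdd_above_abs_bcontfun)

lemma C0_cmult:
  assumes "f \<in> C0" "c \<noteq> 0"
  shows "(\<lambda>x. c * f x) \<in> C0"
proof -
  have "{x. \<bar>c * f x\<bar> > \<epsilon>} = {x. \<bar>f x\<bar> > \<epsilon> / \<bar>c\<bar>}" for \<epsilon>
    using assms(2) by (auto simp: abs_mult field_simps)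
  with assms show ?thesis by (auto simp: C0_def intro!: continuous_intros)
qed

definition C0_functional :: "(('a::topological_space \<Rightarrow> real) \<Rightarrow> real) \<Rightarrow> bool" where
  "C0_functional T \<longleftrightarrow>
     (\<forall>f\<in>C0. \<forall>g\<in>C0. T (\<lambda>x. f x + g x) = T f + T g) \<and>
     (\<forall>c. \<forall>f\<in>C0. T (\<lambda>x. c * f x) = c * T f) \<and>
     (\<exists>C. \<forall>f\<in>C0. \<bar>T f\<bar> \<le> C * C0_norm f)"

definition C0_ball :: "('a::topological_space \<Rightarrow> real) set" where
  "C0_ball = {f\<in>C0. C0_norm f \<le> 1}"

definition functional_norm :: "(('a::topological_space \<Rightarrow> real) \<Rightarrow> real) \<Rightarrow> real" where
  "functional_norm T = (SUP f\<in>C0_ball. \<bar>T f\<bar>)"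

lemma zero_in_C0_ball: "(\<lambda>x. 0) \<in> C0_ball"
  by (simp add: C0_ball_def C0_def C0_norm_def)

lemma abs_le_functional_norm:
  "bdd_above ((\<lambda>f. \<bar>T f\<bar>) ` C0_ball) \<Longrightarrow> f \<in> C0_ball \<Longrightarrow> \<bar>T f\<bar> \<le> functional_norm T"
  unfolding functional_norm_def by (rule cSUP_upper)

lemma functional_norm_nonneg: "bdd_above ((\<lambda>f. \<bar>T f\<bar>) ` C0_ball) \<Longrightarrow> 0 \<le> functional_norm T"
  using abs_le_functional_norm[OF _ zero_in_C0_ball] by (rule order.trans[OF abs_ge_zero])

lemma functional_norm_least:
  "(\<And>f. f \<in> C0_ball \<Longrightarrow> \<bar>T f\<bar> \<le> M) \<Longrightarrow> functional_norm T \<le> M"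
  unfolding functional_norm_def by (rule cSUP_least) (use zero_in_C0_ball in auto)

lemma functional_norm_cong: "(\<And>f. f \<in> C0 \<Longrightarrow> T f = S f) \<Longrightarrow> functional_norm T = functional_norm S"
  unfolding functional_norm_def C0_ball_def by (intro SUP_cong) auto

lemma abs_le_functional_norm_mult:
  assumes hom: "\<And>c f. f \<in> C0 \<Longrightarrow> T (\<lambda>x. c * f x) = c * T f"
    and bdd: "bdd_above ((\<lambda>f. \<bar>T f\<bar>) ` C0_ball)" and f: "f \<in> C0"
  shows "\<bar>T f\<bar> \<le> functional_norm T * C0_norm f"
proof (cases "C0_norm f = 0")
  case True
  then have "\<bar>f x\<bar> \<le> 0" for x using abs_le_C0_norm[OF C0_imp_bcontfun[OF f]] by metis
  then have "f = (\<lambda>x. 0 * f x)" by (auto intro!: ext)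
  then have "T f = 0" using hom[OF f, of 0] by simp
  then show ?thesis using True by simp
next
  case False
  define n where "n = C0_norm f"
  have "n > 0" using False C0_norm_nonneg[OF C0_imp_bcontfun[OF f]] by (simp add: n_def)
  have "(\<lambda>x. (1 / n) * f x) \<in> C0_ball"
    using C0_cmult[OF f, of "1 / n"] C0_norm_cmult[OF C0_imp_bcontfun[OF f], of "1 / n"] \<open>n > 0\<close>
    by (simp add: C0_ball_def n_def)
  then have "\<bar>T (\<lambda>x. (1 / n) * f x)\<bar> \<le> functional_norm T"
    by (rule abs_le_functional_norm[OF bdd])
  then have "\<bar>(1 / n) * T f\<bar> \<le> functional_norm T"
    by (simp only: hom[OF f])
  then show ?thesis using \<open>n > 0\<close> by (simp add: abs_mult field_simps n_def)
qed

lemma C0_functionalI: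
  assumes add: "\<And>f g. f \<in> C0 \<Longrightarrow> g \<in> C0 \<Longrightarrow> T (\<lambda>x. f x + g x) = T f + T g"
    and hom: "\<And>c f. f \<in> C0 \<Longrightarrow> T (\<lambda>x. c * f x) = c * T f"
    and bdd: "bdd_above ((\<lambda>f. \<bar>T f\<bar>) ` C0_ball)"
  shows "C0_functional T"
  unfolding C0_functional_def
  using add hom abs_le_functional_norm_mult[OF hom bdd] by (auto intro!: exI[of _ "functional_norm T"])

lemma C0_functionalD:
  assumes "C0_functional T"
  shows "f \<in> C0 \<Longrightarrow> g \<in> C0 \<Longrightarrow> T (\<lambda>x. f x + g x) = T f + T g"
    and "f \<in> C0 \<Longrightarrow> T (\<lambda>x. c * f x) = c * T f"
    and "bdd_above ((\<lambda>f. \<bar>T f\<bar>) ` C0_ball)"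
proof -
  show "f \<in> C0 \<Longrightarrow> g \<in> C0 \<Longrightarrow> T (\<lambda>x. f x + g x) = T f + T g"
    and "f \<in> C0 \<Longrightarrow> T (\<lambda>x. c * f x) = c * T f"
    using assms by (auto simp: C0_functional_def)
  obtain C where C: "\<And>f. f \<in> C0 \<Longrightarrow> \<bar>T f\<bar> \<le> C * C0_norm f"
    using assms unfolding C0_functional_def by blast
  have "\<bar>T f\<bar> \<le> \<bar>C\<bar>" if "f \<in> C0_ball" for f
  proof -
    have "f \<in> C0" "0 \<le> C0_norm f" "C0_norm f \<le> 1"
      using that C0_norm_nonneg[OF C0_imp_bcontfun] by (auto simp: C0_ball_def)
    then have "C * C0_norm f \<le> \<bar>C\<bar> * C0_norm f" by (intro mult_right_mono) auto
    also have "\<dots> \<le> \<bar>C\<bar>" using \<open>C0_norm f \<le> 1\<close> by (intro mult_left_le) auto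
    finally have "C * C0_norm f \<le> \<bar>C\<bar>" .
    then show ?thesis using C[OF \<open>f \<in> C0\<close>] by linarith
  qed
  then show "bdd_above ((\<lambda>f. \<bar>T f\<bar>) ` C0_ball)" by (rule bdd_aboveI2)
qed

lemma functional_norm_add_le:
  assumes "bdd_above ((\<lambda>f. \<bar>T f\<bar>) ` C0_ball)" "bdd_above ((\<lambda>f. \<bar>S f\<bar>) ` C0_ball)"
  shows "functional_norm (\<lambda>f. T f + S f) \<le> functional_norm T + functional_norm S"
proof (rule functional_norm_least)
  fix f :: "'a \<Rightarrow> real" assume "f \<in> C0_ball"
  then show "\<bar>T f + S f\<bar> \<le> functional_norm T + functional_norm S"
    using abs_le_functional_norm[OF assms(1)] abs_le_functional_norm[OF assms(2)]
      abs_triangle_ineq[of "T f" "S f"] by fastforce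
qed

lemma functional_norm_cmult:
  assumes "bdd_above ((\<lambda>f. \<bar>T f\<bar>) ` C0_ball)"
  shows "functional_norm (\<lambda>f. c * T f) = \<bar>c\<bar> * functional_norm T"
  unfolding functional_norm_def abs_mult using zero_in_C0_ball assms
  by (intro cSUP_cmult_nonneg) auto

lemma C0_functional_lincomb:
  assumes T: "C0_functional T" and S: "C0_functional S"
  shows "C0_functional (\<lambda>f. a * T f + b * S f)"
proof (rule C0_functionalI)
  show "bdd_above ((\<lambda>f. \<bar>a * T f + b * S f\<bar>) ` C0_ball)"
  proof (rule bdd_aboveI2)
    fix f :: "'a \<Rightarrow> real" assume f: "f \<in> C0_ball"
    have "\<bar>a * T f + b * S f\<bar> \<le> \<bar>a\<bar> * \<bar>T f\<bar> + \<bar>b\<bar> * \<bar>S f\<bar>"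
      by (metis abs_mult abs_triangle_ineq)
    also have "\<dots> \<le> \<bar>a\<bar> * functional_norm T + \<bar>b\<bar> * functional_norm S"
      using abs_le_functional_norm[OF C0_functionalD(3)[OF T] f]
        abs_le_functional_norm[OF C0_functionalD(3)[OF S] f]
      by (intro add_mono mult_left_mono) auto
    finally show "\<bar>a * T f + b * S f\<bar> \<le> \<bar>a\<bar> * functional_norm T + \<bar>b\<bar> * functional_norm S" .
  qed
qed (simp_all add: C0_functionalD(1,2)[OF T] C0_functionalD(1,2)[OF S] algebra_simps)

lemma C0_functional_sintegral: "C0_functional (sintegral \<mu>)"
proof (rule C0_functionalI)
  show "sintegral \<mu> (\<lambda>x. f x + g x) = sintegral \<mu> f + sintegral \<mu> g" if "f \<in> C0" "g \<in> C0" for f g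
    using that by (simp add: sintegral_add C0_imp_bcontfun)
  show "sintegral \<mu> (\<lambda>x. c * f x) = c * sintegral \<mu> f" for c f
    by (rule sintegral_cmult)
  have "\<bar>sintegral \<mu> f\<bar> \<le> jordan_mass \<mu> * 1" if "f \<in> C0_ball" for f
  proof (rule abs_sintegral_le)
    have f: "f \<in> C0" "C0_norm f \<le> 1" using that by (auto simp: C0_ball_def)
    then show "f \<in> bcontfun" by (simp add: C0_imp_bcontfun)
    show "\<bar>f x\<bar> \<le> 1" for x using abs_le_C0_norm[OF \<open>f \<in> bcontfun\<close>, of x] f(2) by linarith
  qed
  then show "bdd_above ((\<lambda>f. \<bar>sintegral \<mu> f\<bar>) ` C0_ball)" by (rule bdd_aboveI2)
qed

lemma C0_functional_Cauchy_uniform: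
  assumes T: "\<And>n. C0_functional (T n)"
    and Cauchy: "\<And>\<epsilon>. \<epsilon> > 0 \<Longrightarrow> \<exists>N. \<forall>m\<ge>N. \<forall>n\<ge>N. functional_norm (\<lambda>f. T m f - T n f) < \<epsilon>"
    and "\<epsilon> > 0"
  obtains N where "\<And>m n f. m \<ge> N \<Longrightarrow> n \<ge> N \<Longrightarrow> f \<in> C0 \<Longrightarrow> \<bar>T m f - T n f\<bar> \<le> \<epsilon> * C0_norm f"
proof -
  obtain N where N: "\<And>m n. m \<ge> N \<Longrightarrow> n \<ge> N \<Longrightarrow> functional_norm (\<lambda>f. T m f - T n f) < \<epsilon>"
    using Cauchy[OF \<open>\<epsilon> > 0\<close>] by blast
  have "\<bar>T m f - T n f\<bar> \<le> \<epsilon> * C0_norm f" if "m \<ge> N" "n \<ge> N" "f \<in> C0" for m n f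
  proof -
    have diff: "C0_functional (\<lambda>f. T m f - T n f)"
      using C0_functional_lincomb[OF T T, of 1 m "-1" n] by simp
    have "\<bar>T m f - T n f\<bar> \<le> functional_norm (\<lambda>f. T m f - T n f) * C0_norm f"
      using C0_functionalD[OF diff] \<open>f \<in> C0\<close> by (intro abs_le_functional_norm_mult)
    also have "\<dots> \<le> \<epsilon> * C0_norm f"
      using N[OF that(1,2)] C0_norm_nonneg[OF C0_imp_bcontfun[OF \<open>f \<in> C0\<close>]]
      by (intro mult_right_mono) auto
    finally show ?thesis .
  qed
  then show ?thesis using that by blast
qed

lemma C0_functional_pointwise_limit:
  assumes T: "\<And>n. C0_functional (T n)"
    and Cauchy: "\<And>\<epsilon>. \<epsilon> > 0 \<Longrightarrow> \<exists>N. \<forall>m\<ge>N. \<forall>n\<ge>N. functional_norm (\<lambda>f. T m f - T n f) < \<epsilon>"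
    and f: "f \<in> C0"
  shows "convergent (\<lambda>n. T n f)"
proof -
  have "Cauchy (\<lambda>n. T n f)"
  proof (rule CauchyI)
    fix e :: real assume "e > 0"
    define c where "c = C0_norm f"
    have "c \<ge> 0" using C0_norm_nonneg[OF C0_imp_bcontfun[OF f]] by (simp add: c_def)
    then obtain N where N: "\<And>m n. m \<ge> N \<Longrightarrow> n \<ge> N \<Longrightarrow> \<bar>T m f - T n f\<bar> \<le> e / (c + 1) * c"
      using C0_functional_Cauchy_uniform[OF T Cauchy, of "e / (c + 1)"] \<open>e > 0\<close> f
      unfolding c_def by (metis divide_pos_pos add_nonneg_pos zero_less_one)
    have "e / (c + 1) * c < e" using \<open>e > 0\<close> \<open>c \<ge> 0\<close> by (simp add: field_simps)
    then show "\<exists>M. \<forall>m\<ge>M. \<forall>n\<ge>M. norm (T m f - T n f) < e"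
      using N by (metis real_norm_def order.strict_trans1)
  qed
  then show ?thesis by (simp add: Cauchy_convergent_iff)
qed

lemma C0_functional_complete:
  assumes T: "\<And>n. C0_functional (T n)"
    and Cauchy: "\<And>\<epsilon>. \<epsilon> > 0 \<Longrightarrow> \<exists>N. \<forall>m\<ge>N. \<forall>n\<ge>N. functional_norm (\<lambda>f. T m f - T n f) < \<epsilon>"
  obtains S where "C0_functional S" "(\<lambda>n. functional_norm (\<lambda>f. T n f - S f)) \<longlonglongrightarrow> 0"
proof -
  define S where "S f = lim (\<lambda>n. T n f)" for f
  have lim: "(\<lambda>n. T n f) \<longlonglongrightarrow> S f" if "f \<in> C0" for f
    using C0_functional_pointwise_limit[OF T Cauchy that] by (simp add: S_def convergent_LIMSEQ_iff)
  have near: "\<exists>N. \<forall>n\<ge>N. \<forall>f\<in>C0_ball. \<bar>T n f - S f\<bar> \<le> \<epsilon>" if "\<epsilon> > 0" for \<epsilon>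
  proof -
    obtain N where N: "\<And>m n f. m \<ge> N \<Longrightarrow> n \<ge> N \<Longrightarrow> f \<in> C0 \<Longrightarrow> \<bar>T m f - T n f\<bar> \<le> \<epsilon> * C0_norm f"
      using C0_functional_Cauchy_uniform[OF T Cauchy \<open>\<epsilon> > 0\<close>] by blast
    have "\<bar>T n f - S f\<bar> \<le> \<epsilon>" if "n \<ge> N" "f \<in> C0_ball" for n f
    proof (rule LIMSEQ_le_const2)
      have f: "f \<in> C0" "C0_norm f \<le> 1" using \<open>f \<in> C0_ball\<close> by (auto simp: C0_ball_def)
      show "(\<lambda>m. \<bar>T n f - T m f\<bar>) \<longlonglongrightarrow> \<bar>T n f - S f\<bar>"
        by (intro tendsto_intros lim f)
      have "\<epsilon> * C0_norm f \<le> \<epsilon>" using f(2) \<open>\<epsilon> > 0\<close> by (simp add: mult_left_le)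
      then show "\<exists>N'. \<forall>m\<ge>N'. \<bar>T n f - T m f\<bar> \<le> \<epsilon>"
        using N[OF \<open>n \<ge> N\<close> _ f(1)] by (meson order.trans)
    qed
    then show ?thesis by blast
  qed
  have "C0_functional S"
  proof (rule C0_functionalI)
    show "S (\<lambda>x. f x + g x) = S f + S g" if "f \<in> C0" "g \<in> C0" for f g
      using tendsto_add[OF lim lim] that C0_functionalD(1)[OF T] by (simp add: S_def limI)
    show "S (\<lambda>x. c * f x) = c * S f" if "f \<in> C0" for c f
      using tendsto_mult_left[OF lim] that C0_functionalD(2)[OF T] by (simp add: S_def limI)
    obtain N where N: "\<And>f. f \<in> C0_ball \<Longrightarrow> \<bar>T N f - S f\<bar> \<le> 1"
      using near[of 1] by auto
    have "\<bar>S f\<bar> \<le> functional_norm (T N) + 1" if "f \<in> C0_ball" for f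
      using N[OF that] abs_le_functional_norm[OF C0_functionalD(3)[OF T] that, of N] by linarith
    then show "bdd_above ((\<lambda>f. \<bar>S f\<bar>) ` C0_ball)" by (rule bdd_aboveI2)
  qed
  moreover have "(\<lambda>n. functional_norm (\<lambda>f. T n f - S f)) \<longlonglongrightarrow> 0"
  proof (rule LIMSEQ_I)
    fix r :: real assume "r > 0"
    then obtain N where N: "\<And>n f. n \<ge> N \<Longrightarrow> f \<in> C0_ball \<Longrightarrow> \<bar>T n f - S f\<bar> \<le> r / 2"
      using near[of "r / 2"] by auto
    have "norm (functional_norm (\<lambda>f. T n f - S f) - 0) < r" if "n \<ge> N" for n
    proof -
      have "C0_functional (\<lambda>f. T n f - S f)"
        using C0_functional_lincomb[OF T \<open>C0_functional S\<close>, of 1 n "-1"] by simp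
      then have "0 \<le> functional_norm (\<lambda>f. T n f - S f)"
        by (intro functional_norm_nonneg C0_functionalD(3))
      moreover have "functional_norm (\<lambda>f. T n f - S f) \<le> r / 2"
        using N[OF that] by (rule functional_norm_least)
      ultimately show ?thesis using \<open>r > 0\<close> by simp
    qed
    then show "\<exists>N. \<forall>n\<ge>N. norm (functional_norm (\<lambda>f. T n f - S f) - 0) < r" by blast
  qed
  ultimately show ?thesis using that by blast
qed

section \<open>The space B\<close>

lemma fmu_in_Bspace: "\<mu> \<in> Meas \<Longrightarrow> fmu K \<mu> \<in> Bspace K"
  by (auto simp: Bspace_def)

lemma BspaceE:
  assumes "f \<in> Bspace K"
  obtains \<mu> where "\<mu> \<in> Meas" "f = fmu K \<mu>"
  using assms by (auto simp: Bspace_def)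

locale pre_rkbs =
  fixes K :: "'a::topological_space \<Rightarrow> 'a \<Rightarrow> real"
  assumes dual_onto:
      "C0_functional (T :: ('a \<Rightarrow> real) \<Rightarrow> real) \<Longrightarrow> \<exists>\<mu>\<in>Meas. \<forall>f\<in>C0. T f = sintegral \<mu> f"
    and dual_isometric: "(\<mu> :: 'a set \<Rightarrow> real) \<in> Meas \<Longrightarrow> functional_norm (sintegral \<mu>) = tv_norm \<mu>"
    and K_C0: "(\<lambda>t. K t x) \<in> C0"
    and K_dense: "f \<in> C0 \<Longrightarrow> \<epsilon> > 0 \<Longrightarrow>
      \<exists>(n::nat) (c::nat \<Rightarrow> real) (xs::nat \<Rightarrow> 'a). C0_norm (\<lambda>t. f t - (\<Sum>i<n. c i * K t (xs i))) < \<epsilon>"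
begin

lemma sintegral_eq_if_fmu_eq:
  assumes eq: "fmu K \<mu> = fmu K \<nu>" and f: "f \<in> C0"
  shows "sintegral \<mu> f = sintegral \<nu> f"
proof -
  define M where "M = jordan_mass \<mu> + jordan_mass \<nu>"
  have "M \<ge> 0" by (simp add: M_def jordan_mass_nonneg)
  have approx: "\<bar>sintegral \<mu> f - sintegral \<nu> f\<bar> \<le> M * \<epsilon>" if "\<epsilon> > 0" for \<epsilon>
  proof -
    obtain n :: nat and c :: "nat \<Rightarrow> real" and xs :: "nat \<Rightarrow> 'a"
      where close: "C0_norm (\<lambda>t. f t - (\<Sum>i<n. c i * K t (xs i))) < \<epsilon>"
      using K_dense[OF f \<open>\<epsilon> > 0\<close>] by blast
    define p where "p t = (\<Sum>i<n. c i * K t (xs i))" for t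
    have p: "p \<in> bcontfun"
      unfolding p_def by (intro bcontfun_sum bcontfun_cmult C0_imp_bcontfun K_C0)
    have h: "(\<lambda>t. f t - p t) \<in> bcontfun"
      using minus_cont[OF C0_imp_bcontfun[OF f] p] .
    have h_small: "\<bar>f t - p t\<bar> \<le> \<epsilon>" for t
      using abs_le_C0_norm[OF h, of t] close unfolding p_def by linarith
    have "(\<lambda>t. c i * K t (xs i)) \<in> bcontfun" for i
      by (intro bcontfun_cmult C0_imp_bcontfun K_C0)
    then have "sintegral \<rho> p = (\<Sum>i<n. c i * fmu K \<rho> (xs i))" for \<rho>
      unfolding p_def by (simp add: sintegral_sum sintegral_cmult fmu_def)
    then have "sintegral \<mu> p = sintegral \<nu> p" by (simp only: eq)
    then have "sintegral \<mu> f - sintegral \<nu> f =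
        sintegral \<mu> (\<lambda>t. f t - p t) - sintegral \<nu> (\<lambda>t. f t - p t)"
      using sintegral_diff[OF C0_imp_bcontfun[OF f] p] by simp
    also have "\<bar>\<dots>\<bar> \<le> jordan_mass \<mu> * \<epsilon> + jordan_mass \<nu> * \<epsilon>"
      using abs_sintegral_le[OF h h_small, of \<mu>] abs_sintegral_le[OF h h_small, of \<nu>]
        abs_triangle_ineq4[of "sintegral \<mu> (\<lambda>t. f t - p t)" "sintegral \<nu> (\<lambda>t. f t - p t)"]
      by linarith
    finally show ?thesis by (simp add: M_def distrib_right)
  qed
  have "\<bar>sintegral \<mu> f - sintegral \<nu> f\<bar> \<le> 0 + e" if "e > 0" for e
  proof -
    have "\<bar>sintegral \<mu> f - sintegral \<nu> f\<bar> \<le> M * (e / (M + 1))"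
      using \<open>M \<ge> 0\<close> \<open>e > 0\<close> by (intro approx) simp
    also have "\<dots> \<le> (M + 1) * (e / (M + 1))"
      using \<open>M \<ge> 0\<close> \<open>e > 0\<close> by (intro mult_right_mono) auto
    also have "\<dots> = e" using \<open>M \<ge> 0\<close> by simp
    finally show ?thesis by simp
  qed
  then have "\<bar>sintegral \<mu> f - sintegral \<nu> f\<bar> \<le> 0" by (rule field_le_epsilon)
  then show ?thesis by simp
qed

lemma normB_well_defined:
  "\<forall>\<mu>\<in>Meas. \<forall>\<nu>\<in>Meas. fmu K \<mu> = fmu K \<nu> \<longrightarrow> tv_norm \<mu> = tv_norm \<nu>"
proof (intro ballI impI)
  fix \<mu> \<nu> assume "\<mu> \<in> Meas" "\<nu> \<in> Meas" and eq: "fmu K \<mu> = fmu K \<nu>"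
  have "functional_norm (sintegral \<mu>) = functional_norm (sintegral \<nu>)"
    by (rule functional_norm_cong) (rule sintegral_eq_if_fmu_eq[OF eq])
  then show "tv_norm \<mu> = tv_norm \<nu>"
    using dual_isometric \<open>\<mu> \<in> Meas\<close> \<open>\<nu> \<in> Meas\<close> by simp
qed

lemma normB_fmu:
  assumes "\<mu> \<in> Meas"
  shows "normB K (fmu K \<mu>) = functional_norm (sintegral \<mu>)"
proof -
  let ?\<nu> = "SOME \<nu>. \<nu> \<in> Meas \<and> fmu K \<mu> = fmu K \<nu>"
  have "\<exists>\<nu>. \<nu> \<in> Meas \<and> fmu K \<mu> = fmu K \<nu>" using assms by blast
  then have "?\<nu> \<in> Meas \<and> fmu K \<mu> = fmu K ?\<nu>" by (rule someI_ex)
  then have "tv_norm \<mu> = tv_norm ?\<nu>"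
    using normB_well_defined[rule_format, OF assms] by blast
  then show ?thesis unfolding normB_def dual_isometric[OF assms] by simp
qed

lemma lincomb_representation:
  "\<exists>\<rho>\<in>Meas. (\<forall>f\<in>C0. sintegral \<rho> f = a * sintegral \<mu> f + b * sintegral \<nu> f) \<and>
     fmu K \<rho> = (\<lambda>x. a * fmu K \<mu> x + b * fmu K \<nu> x)"
proof -
  obtain \<rho> where \<rho>: "\<rho> \<in> Meas" "\<forall>f\<in>C0. a * sintegral \<mu> f + b * sintegral \<nu> f = sintegral \<rho> f"
    using dual_onto[OF C0_functional_lincomb[OF C0_functional_sintegral C0_functional_sintegral]]
    by blast
  moreover have "fmu K \<rho> = (\<lambda>x. a * fmu K \<mu> x + b * fmu K \<nu> x)"
    using \<rho>(2) K_C0 by (simp add: fmu_def)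
  ultimately show ?thesis by auto
qed

lemma lincomb_fmu_in_Bspace: "(\<lambda>x. a * fmu K \<mu> x + b * fmu K \<nu> x) \<in> Bspace K"
proof -
  obtain \<rho> where "\<rho> \<in> Meas" "fmu K \<rho> = (\<lambda>x. a * fmu K \<mu> x + b * fmu K \<nu> x)"
    using lincomb_representation[of a \<mu> b \<nu>] by blast
  then show ?thesis by (simp flip: \<open>fmu K \<rho> = _\<close> add: fmu_in_Bspace)
qed

lemma normB_lincomb_fmu:
  "normB K (\<lambda>x. a * fmu K \<mu> x + b * fmu K \<nu> x) =
    functional_norm (\<lambda>f. a * sintegral \<mu> f + b * sintegral \<nu> f)"
proof -
  obtain \<rho> where \<rho>: "\<rho> \<in> Meas"
    "\<And>f. f \<in> C0 \<Longrightarrow> sintegral \<rho> f = a * sintegral \<mu> f + b * sintegral \<nu> f"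
    "fmu K \<rho> = (\<lambda>x. a * fmu K \<mu> x + b * fmu K \<nu> x)"
    using lincomb_representation[of a \<mu> b \<nu>] by blast
  have "normB K (\<lambda>x. a * fmu K \<mu> x + b * fmu K \<nu> x) = normB K (fmu K \<rho>)"
    by (simp only: \<rho>(3))
  also have "\<dots> = functional_norm (sintegral \<rho>)" by (rule normB_fmu[OF \<rho>(1)])
  also have "\<dots> = functional_norm (\<lambda>f. a * sintegral \<mu> f + b * sintegral \<nu> f)"
    by (rule functional_norm_cong[OF \<rho>(2)])
  finally show ?thesis .
qed

lemma Bspace_zero: "(\<lambda>x. 0) \<in> Bspace K"
  using lincomb_fmu_in_Bspace[of 0 _ 0] by simp

lemma Bspace_add:
  assumes "f \<in> Bspace K" "g \<in> Bspace K"
  shows "(\<lambda>x. f x + g x) \<in> Bspace K"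
proof -
  obtain \<mu> \<nu> where "f = fmu K \<mu>" "g = fmu K \<nu>"
    using assms by (meson BspaceE)
  then show ?thesis using lincomb_fmu_in_Bspace[of 1 \<mu> 1 \<nu>] by simp
qed

lemma Bspace_cmult:
  assumes "f \<in> Bspace K"
  shows "(\<lambda>x. c * f x) \<in> Bspace K"
proof -
  obtain \<mu> where "f = fmu K \<mu>" using assms by (rule BspaceE)
  then show ?thesis using lincomb_fmu_in_Bspace[of c \<mu> 0 \<mu>] by simp
qed

lemma normB_nonneg:
  assumes "f \<in> Bspace K"
  shows "0 \<le> normB K f"
proof -
  obtain \<mu> where "\<mu> \<in> Meas" "f = fmu K \<mu>" using assms by (rule BspaceE)
  then show ?thesis
    using functional_norm_nonneg[OF C0_functionalD(3)[OF C0_functional_sintegral]]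
    by (simp add: normB_fmu)
qed

lemma normB_triangle:
  assumes "f \<in> Bspace K" "g \<in> Bspace K"
  shows "normB K (\<lambda>x. f x + g x) \<le> normB K f + normB K g"
proof -
  obtain \<mu> \<nu> where "\<mu> \<in> Meas" "\<nu> \<in> Meas" "f = fmu K \<mu>" "g = fmu K \<nu>"
    using assms by (meson BspaceE)
  then show ?thesis
    using normB_lincomb_fmu[of 1 \<mu> 1 \<nu>]
      functional_norm_add_le[OF C0_functionalD(3)[OF C0_functional_sintegral]
        C0_functionalD(3)[OF C0_functional_sintegral]]
    by (simp add: normB_fmu)
qed

lemma normB_cmult:
  assumes "f \<in> Bspace K"
  shows "normB K (\<lambda>x. c * f x) = \<bar>c\<bar> * normB K f"
proof -
  obtain \<mu> where "\<mu> \<in> Meas" "f = fmu K \<mu>" using assms by (rule BspaceE)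
  then show ?thesis
    using normB_lincomb_fmu[of c \<mu> 0 \<mu>]
      functional_norm_cmult[OF C0_functionalD(3)[OF C0_functional_sintegral]]
    by (simp add: normB_fmu)
qed

lemma abs_le_normB:
  assumes "f \<in> Bspace K"
  shows "\<bar>f x\<bar> \<le> C0_norm (\<lambda>t. K t x) * normB K f"
proof -
  obtain \<mu> where \<mu>: "\<mu> \<in> Meas" "f = fmu K \<mu>" using assms by (rule BspaceE)
  have "\<bar>sintegral \<mu> (\<lambda>t. K t x)\<bar> \<le> functional_norm (sintegral \<mu>) * C0_norm (\<lambda>t. K t x)"
    using C0_functionalD[OF C0_functional_sintegral] K_C0 by (intro abs_le_functional_norm_mult)
  moreover have "f x = sintegral \<mu> (\<lambda>t. K t x)" using \<mu>(2) by (simp add: fmu_def)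
  moreover have "normB K f = functional_norm (sintegral \<mu>)" using \<mu> normB_fmu by simp
  ultimately show ?thesis by (simp add: mult.commute)
qed

lemma normB_eq_0_iff:
  assumes "f \<in> Bspace K"
  shows "normB K f = 0 \<longleftrightarrow> (\<forall>x. f x = 0)"
proof
  show "\<forall>x. f x = 0" if "normB K f = 0"
  proof
    fix x
    show "f x = 0" using abs_le_normB[OF assms, of x] that by simp
  qed
next
  assume zero: "\<forall>x. f x = 0"
  obtain \<mu> where \<mu>: "\<mu> \<in> Meas" "f = fmu K \<mu>" using assms by (rule BspaceE)
  have "sintegral \<mu> h = 0 * sintegral \<mu> h" if "h \<in> C0" for h
  proof -
    obtain \<rho> where \<rho>: "\<And>h. h \<in> C0 \<Longrightarrow> sintegral \<rho> h = 0"
      "fmu K \<rho> = (\<lambda>x. 0)"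
      using lincomb_representation[of 0 \<mu> 0 \<mu>] by auto
    moreover have "fmu K \<mu> = (\<lambda>x. 0)" using zero \<mu>(2) by auto
    ultimately have "fmu K \<mu> = fmu K \<rho>" by simp
    then show ?thesis using sintegral_eq_if_fmu_eq[OF \<open>fmu K \<mu> = fmu K \<rho>\<close> that] \<rho>(1)[OF that] by simp
  qed
  then have "functional_norm (sintegral \<mu>) = functional_norm (\<lambda>h. 0 * sintegral \<mu> h)"
    by (rule functional_norm_cong)
  then have "normB K f = functional_norm (\<lambda>h. 0 * sintegral \<mu> h)"
    using normB_fmu[OF \<mu>(1)] \<mu>(2) by simp
  also have "\<dots> = 0"
    using functional_norm_cmult[OF C0_functionalD(3)[OF C0_functional_sintegral], where c = 0]
    by simp
  finally show "normB K f = 0" .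
qed

lemma Bspace_complete:
  assumes F: "\<And>n. F n \<in> Bspace K"
    and Cauchy: "\<And>\<epsilon>. \<epsilon> > 0 \<Longrightarrow> \<exists>N. \<forall>m\<ge>N. \<forall>n\<ge>N. normB K (\<lambda>x. F m x - F n x) < \<epsilon>"
  shows "\<exists>f\<in>Bspace K. (\<lambda>n. normB K (\<lambda>x. F n x - f x)) \<longlonglongrightarrow> 0"
proof -
  obtain \<mu> where \<mu>: "\<And>n. \<mu> n \<in> Meas" "\<And>n. F n = fmu K (\<mu> n)"
  proof -
    have "\<forall>n. \<exists>\<mu>. \<mu> \<in> Meas \<and> F n = fmu K \<mu>" using F unfolding Bspace_def by blast
    then show ?thesis unfolding choice_iff using that by blast
  qed
  have dist: "normB K (\<lambda>x. fmu K \<alpha> x - fmu K \<beta> x) =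
      functional_norm (\<lambda>f. sintegral \<alpha> f - sintegral \<beta> f)" for \<alpha> \<beta>
    using normB_lincomb_fmu[of 1 \<alpha> "-1" \<beta>] by simp
  have "\<exists>N. \<forall>m\<ge>N. \<forall>n\<ge>N. functional_norm (\<lambda>f. sintegral (\<mu> m) f - sintegral (\<mu> n) f) < \<epsilon>"
    if "\<epsilon> > 0" for \<epsilon>
    using Cauchy[OF that] by (simp add: \<mu>(2) dist)
  then obtain S where S: "C0_functional S"
      "(\<lambda>n. functional_norm (\<lambda>f. sintegral (\<mu> n) f - S f)) \<longlonglongrightarrow> 0"
    by (rule C0_functional_complete[OF C0_functional_sintegral])
  obtain \<rho> where \<rho>: "\<rho> \<in> Meas" "\<And>f. f \<in> C0 \<Longrightarrow> S f = sintegral \<rho> f"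
    using dual_onto[OF S(1)] by blast
  have "normB K (\<lambda>x. F n x - fmu K \<rho> x) = functional_norm (\<lambda>f. sintegral (\<mu> n) f - S f)" for n
  proof -
    have "functional_norm (\<lambda>f. sintegral (\<mu> n) f - sintegral \<rho> f) =
        functional_norm (\<lambda>f. sintegral (\<mu> n) f - S f)"
      by (rule functional_norm_cong) (simp add: \<rho>(2))
    then show ?thesis by (simp add: \<mu>(2) dist)
  qed
  then have "(\<lambda>n. normB K (\<lambda>x. F n x - fmu K \<rho> x)) \<longlonglongrightarrow> 0" using S(2) by simp
  then show ?thesis using fmu_in_Bspace[OF \<rho>(1)] by blast
qed

end

theorem proposition2p1:
  fixes K :: "'a::topological_space \<Rightarrow> 'a \<Rightarrow> real"
  assumes dual_isometric:
    "\<forall>\<mu>\<in>(Meas :: ('a set \<Rightarrow> real) set). (SUP f\<in>{f\<in>C0. C0_norm f \<le> 1}. \<bar>sintegral \<mu> f\<bar>) = tv_norm \<mu>"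
  and dual_onto:
    "\<forall>T :: ('a \<Rightarrow> real) \<Rightarrow> real.
       (\<forall>f\<in>C0. \<forall>g\<in>C0. T (\<lambda>x. f x + g x) = T f + T g) \<and>
       (\<forall>c. \<forall>f\<in>C0. T (\<lambda>x. c * f x) = c * T f) \<and>
       (\<exists>C. \<forall>f\<in>C0. \<bar>T f\<bar> \<le> C * C0_norm f)
       \<longrightarrow> (\<exists>\<mu>\<in>Meas. \<forall>f\<in>C0. T f = sintegral \<mu> f)"
  and nonsingular:
    "\<forall>(m::nat) (xs::nat \<Rightarrow> 'a). inj_on xs {..<m} \<longrightarrow>
       (\<forall>c::nat \<Rightarrow> real. (\<forall>j<m. (\<Sum>k<m. K (xs k) (xs j) * c k) = 0) \<longrightarrow> (\<forall>k<m. c k = 0))"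
  and K_C0: "\<forall>x. (\<lambda>t. K t x) \<in> C0"
  and K_dense:
    "\<forall>f\<in>C0. \<forall>\<epsilon>>0. \<exists>(n::nat) (c::nat \<Rightarrow> real) (xs::nat \<Rightarrow> 'a).
       C0_norm (\<lambda>t. f t - (\<Sum>i<n. c i * K t (xs i))) < \<epsilon>"
  shows
    \<comment> \<open>the norm of B is well defined\<close>
    "(\<forall>\<mu>\<in>Meas. \<forall>\<nu>\<in>Meas. fmu K \<mu> = fmu K \<nu> \<longrightarrow> tv_norm \<mu> = tv_norm \<nu>) \<and>
     \<comment> \<open>B is a linear space of functions on X\<close>
     (\<lambda>x. 0) \<in> Bspace K \<and>
     (\<forall>f\<in>Bspace K. \<forall>g\<in>Bspace K. (\<lambda>x. f x + g x) \<in> Bspace K) \<and>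
     (\<forall>c. \<forall>f\<in>Bspace K. (\<lambda>x. c * f x) \<in> Bspace K) \<and>
     \<comment> \<open>normB is a norm on B\<close>
     (\<forall>f\<in>Bspace K. normB K f \<ge> 0) \<and>
     (\<forall>f\<in>Bspace K. \<forall>g\<in>Bspace K. normB K (\<lambda>x. f x + g x) \<le> normB K f + normB K g) \<and>
     (\<forall>c. \<forall>f\<in>Bspace K. normB K (\<lambda>x. c * f x) = \<bar>c\<bar> * normB K f) \<and>
     \<comment> \<open>completeness\<close>
     (\<forall>F::nat \<Rightarrow> 'a \<Rightarrow> real. (\<forall>n. F n \<in> Bspace K) \<and>
        (\<forall>\<epsilon>>0. \<exists>N. \<forall>m\<ge>N. \<forall>n\<ge>N. normB K (\<lambda>x. F m x - F n x) < \<epsilon>) \<longrightarrow>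
        (\<exists>f\<in>Bspace K. (\<lambda>n. normB K (\<lambda>x. F n x - f x)) \<longlonglongrightarrow> 0)) \<and>
     \<comment> \<open>point evaluations are continuous\<close>
     (\<forall>x. \<exists>C. \<forall>f\<in>Bspace K. \<bar>f x\<bar> \<le> C * normB K f) \<and>
     \<comment> \<open>norm zero iff the function vanishes everywhere\<close>
     (\<forall>f\<in>Bspace K. normB K f = 0 \<longleftrightarrow> (\<forall>x. f x = 0))"
proof -
  interpret pre_rkbs K
  proof
    show "\<exists>\<mu>\<in>Meas. \<forall>f\<in>C0. T f = sintegral \<mu> f"
      if "C0_functional T" for T :: "('a \<Rightarrow> real) \<Rightarrow> real"
      using that unfolding C0_functional_def by (rule dual_onto[THEN spec, THEN mp])
    show "functional_norm (sintegral \<mu>) = tv_norm \<mu>" if "\<mu> \<in> Meas" for \<mu> :: "'a set \<Rightarrow> real"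
      using dual_isometric that unfolding functional_norm_def C0_ball_def by blast
    show "(\<lambda>t. K t x) \<in> C0" for x
      using K_C0 by blast
    show "\<exists>(n::nat) (c::nat \<Rightarrow> real) (xs::nat \<Rightarrow> 'a). C0_norm (\<lambda>t. f t - (\<Sum>i<n. c i * K t (xs i))) < \<epsilon>"
      if "f \<in> C0" "\<epsilon> > 0" for f \<epsilon>
      using K_dense that by blast
  qed
  have evaluation: "\<exists>C. \<forall>f\<in>Bspace K. \<bar>f x\<bar> \<le> C * normB K f" for x
    using abs_le_normB by blast
  show ?thesis
    by (intro conjI; (rule normB_well_defined Bspace_zero)?;
        simp add: Bspace_add Bspace_cmult normB_nonneg normB_triangle normB_cmult Bspace_complete
          evaluation normB_eq_0_iff)
qed

end
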